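(* Let $\theta\in(0,1)$ and $p=\frac1{1-\theta}$. In the Boosted HiPPA setting of the context, let $\{x^k\}$ and $\{\bar x^k\}$ be generated by the algorithm, let $\bar y^k\in\operatorname{prox}^p_{\gamma\varphi}(x^k)$ satisfy $\|\bar x^k-\bar y^k\|=\operatorname{dist}(\bar x^k,\operatorname{prox}^p_{\gamma\varphi}(x^k))$, and let $\Omega$ be the set of cluster points of $\{x^k\}$. Suppose $\varphi$ satisfies the KL property with exponent $\theta$ on $\Omega$, $\{x^k\}$ is bounded, there is $D\ge0$ with $\|d^k\|\le D\|R^{\varepsilon_k}_\gamma(x^k)\|$ for all $k$, and the sequences $\{\varepsilon_k\},\{\delta_k\}$ satisfy: there are $\omega\in(0,1)$ and a non-increasing sequence of positive scalars $\{\beta_k\}$ with $\sum_k\beta_k<\infty$ such that for all $k$, $$\varepsilon_k^{1/p},\ \delta_k\le\min\Big\{\beta_k,\ \omega\|x^k-\bar x^k\|,\ \min_{0\le i\le j\le k}\beta_j\|x^i-\bar x^i\|\Big\},$$ together with $\sum_{k=0}^\infty\sum_{j\ge k}\delta_j<\infty$ and $\sum_{k=0}^\infty\sum_{j\ge k}\varepsilon_j^{1/p}<\infty$. Then $\{x^k\}$, $\{\bar x^k\}$, $\{\bar y^k\}$ converge globally and linearly to a proximal fixed point (a point $\hat x$ with $\hat x\in\operatorname{prox}^p_{\gamma\varphi}(\hat x)$).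
   Context: Standing setting. $\varphi:\mathbb{R}^n\to\mathbb{R}\cup\{+\infty\}$ is proper, lsc and bounded from below. For $\gamma>0$: $\operatorname{prox}^p_{\gamma\varphi}(x):=\operatorname{argmin}_y\big(\varphi(y)+\frac1{p\gamma}\|x-y\|^p\big)$, $\varphi^p_\gamma(x):=\inf_y\big(\varphi(y)+\frac1{p\gamma}\|x-y\|^p\big)$. $\{\varepsilon_k\},\{\delta_k\}$ are non-increasing positive sequences with $\sum_k\varepsilon_k<\infty$, $\delta_k\downarrow0$. Prox approximation: for each index $j$ and point $x$ needed, a point $P_j(x)$ is available with $\operatorname{dist}(P_j(x),\operatorname{prox}^p_{\gamma\varphi}(x))<\delta_j$ and $\varphi(P_j(x))+\frac1{p\gamma}\|x-P_j(x)\|^p<\varphi^p_\gamma(x)+\varepsilon_j$. Define $\varphi^{p,\varepsilon_j}_\gamma(x):=\varphi(P_j(x))+\frac1{p\gamma}\|x-P_j(x)\|^p$, $R^{\varepsilon_j}_\gamma(x):=x-P_j(x)$. Boosted HiPPA: choose $x^0$, $\gamma>0$, $\sigma\in(0,\frac1{p\gamma})$, $\vartheta\in(0,1)$. At iteration $k$: $\bar x^k:=P_k(x^k)$; choose a direction $d^k$; for $m=0,1,\dots$ set $\alpha_k=\vartheta^m$, $\hat x^{k+1}=(1-\alpha_k)\bar x^k+\alpha_k(x^k+d^k)$, until $\varphi^{p,\varepsilon_{k+1}}_\gamma(\hat x^{k+1})\le\varphi^{p,\varepsilon_k}_\gamma(x^k)-\sigma\|R^{\varepsilon_k}_\gamma(x^k)\|^p+\varepsilon_k+\varepsilon_{k+1}$;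 set $x^{k+1}=\hat x^{k+1}$. $\partial$ is the Mordukhovich (limiting) subdifferential. $h$ satisfies the KL property with exponent $\theta$ at $\bar x\in\operatorname{Dom}\partial h$ if there are $r>0$, $\eta\in(0,\infty]$, $c>0$ such that, with $\phi(t)=ct^{1-\theta}$, $\phi'(|h(x)-h(\bar x)|)\operatorname{dist}(0,\partial h(x))\ge1$ for all $x\in\mathbb{B}(\bar x;r)\cap\operatorname{Dom}\partial h$ with $0<|h(x)-h(\bar x)|<\eta$. *)

theory Defs
  imports "HOL-Analysis.Analysis" "HOL-Library.Extended_Real"
begin

definition proper_fun :: "('a \<Rightarrow> ereal) \<Rightarrow> bool" where
  "proper_fun f \<longleftrightarrow> (\<forall>x. f x \<noteq> -\<infinity>) \<and> (\<exists>x. f x \<noteq> \<infinity>)"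

definition lsc_fun :: "('a::metric_space \<Rightarrow> ereal) \<Rightarrow> bool" where
  "lsc_fun f \<longleftrightarrow> (\<forall>x xs. xs \<longlonglongrightarrow> x \<longrightarrow> f x \<le> liminf (\<lambda>k. f (xs k)))"

definition bounded_below_fun :: "('a \<Rightarrow> ereal) \<Rightarrow> bool" where
  "bounded_below_fun f \<longleftrightarrow> (\<exists>c::real. \<forall>x. ereal c \<le> f x)"

definition hprox :: "('a::real_normed_vector \<Rightarrow> ereal) \<Rightarrow> real \<Rightarrow> real \<Rightarrow> 'a \<Rightarrow> 'a set" where
  "hprox f p \<gamma> x = {y. \<forall>z. f y + ereal (norm (x - y) powr p / (p * \<gamma>))
                          \<le> f z + ereal (norm (x - z) powr p / (p * \<gamma>))}"

definition henv :: "('a::real_normed_vector \<Rightarrow> ereal) \<Rightarrow> real \<Rightarrow> real \<Rightarrow> 'a \<Rightarrow> ereal" where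
  "henv f p \<gamma> x = (INF y. f y + ereal (norm (x - y) powr p / (p * \<gamma>)))"

definition frechet_subdiff :: "('a::real_inner \<Rightarrow> ereal) \<Rightarrow> 'a \<Rightarrow> 'a set" where
  "frechet_subdiff f x = {v. \<bar>f x\<bar> \<noteq> \<infinity> \<and>
     (\<forall>e>0. \<exists>r>0. \<forall>y. norm (y - x) < r \<longrightarrow>
        f x + ereal (inner v (y - x) - e * norm (y - x)) \<le> f y)}"

definition limiting_subdiff :: "('a::real_inner \<Rightarrow> ereal) \<Rightarrow> 'a \<Rightarrow> 'a set" where
  "limiting_subdiff f x = {v. \<exists>xs vs. xs \<longlonglongrightarrow> x \<and> (\<lambda>k. f (xs k)) \<longlonglongrightarrow> f x \<and>
     (\<forall>k. vs k \<in> frechet_subdiff f (xs k)) \<and> vs \<longlonglongrightarrow> v}"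

definition dom_subdiff :: "('a::real_inner \<Rightarrow> ereal) \<Rightarrow> 'a set" where
  "dom_subdiff f = {x. limiting_subdiff f x \<noteq> {}}"

text \<open>KL property with exponent theta at xbar, desingularizing function phi(t) = c t^(1-theta),
  so phi'(t) = c (1-theta) t^(-theta).\<close>

definition KL_exponent_at :: "('a::real_inner \<Rightarrow> ereal) \<Rightarrow> real \<Rightarrow> 'a \<Rightarrow> bool" where
  "KL_exponent_at h \<theta> xbar \<longleftrightarrow> xbar \<in> dom_subdiff h \<and>
     (\<exists>r>0. \<exists>\<eta>::ereal. \<eta> > 0 \<and> (\<exists>c>0. \<forall>x \<in> cball xbar r \<inter> dom_subdiff h.
        0 < \<bar>h x - h xbar\<bar> \<and> \<bar>h x - h xbar\<bar> < \<eta> \<longrightarrow>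
        c * (1 - \<theta>) * (real_of_ereal \<bar>h x - h xbar\<bar>) powr (- \<theta>)
          * infdist 0 (limiting_subdiff h x) \<ge> 1))"

definition cluster_points :: "(nat \<Rightarrow> 'a::topological_space) \<Rightarrow> 'a set" where
  "cluster_points x = {z. \<exists>r. strict_mono r \<and> (x \<circ> r) \<longlonglongrightarrow> z}"

definition env_eps :: "('a::real_normed_vector \<Rightarrow> ereal) \<Rightarrow> real \<Rightarrow> real \<Rightarrow> (nat \<Rightarrow> 'a \<Rightarrow> 'a) \<Rightarrow> nat \<Rightarrow> 'a \<Rightarrow> ereal" where
  "env_eps f p \<gamma> P j x = f (P j x) + ereal (norm (x - P j x) powr p / (p * \<gamma>))"

end

theory Submission
  imports Defs
begin

(* Once the errors are small relative to the residual r_k = norm (x^k - xbar^k), the inexact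
   envelope values Phi_k = phi^{p,eps_k}_gamma(x^k) decrease by sigma/2 r_k^p, so they converge to
   some L, the residuals vanish and every cluster point z is a proximal fixed point with
   phi z = L.  At the exact prox point ybar^k the gradient of norm (x^k - .)^p / (p gamma) yields a
   subgradient of norm s_k^(p-1) / gamma, s_k = norm (x^k - ybar^k) <= 2 r_k, so near z the KL
   inequality with exponent theta = 1 - 1/p bounds |phi(ybar^k) - L| by a multiple of s_k^p.
   Hence Phi_k - L <= C r_k^p, and with the sufficient decrease Phi_k - L contracts by a fixed
   factor while the iterates stay near z.  The steps are at most (1 + D) r_k <= c (Phi_k - L)^(1/p),
   so starting late enough near z the iterates never leave, and the geometrically decaying steps
   give linear convergence. *)

lemma GDERIV_norm_powr:
  fixes u :: "'a::real_inner"
  assumes "p > 1"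
  shows "GDERIV (\<lambda>w. norm w powr p) u :> (p * norm u powr (p - 1)) *\<^sub>R sgn u"
proof (cases "u = 0")
  case False
  have "DERIV (\<lambda>t. t powr p) (norm u) :> p * norm u powr (p - 1)"
    using False by (intro has_real_derivative_powr) auto
  from GDERIV_DERIV_compose[OF GDERIV_norm[OF False] this] show ?thesis .
next
  case True
  have "((\<lambda>w. norm w powr (p - 1)) \<longlongrightarrow> 0) (at (0::'a))"
    using assms by (intro tendsto_zero_powrI tendsto_norm_zero) auto
  then have "((\<lambda>w. norm (norm w powr p) / norm w) \<longlongrightarrow> 0) (at (0::'a))"
    by (rule Lim_transform_eventually) (auto simp: eventually_at_filter powr_diff)
  then show ?thesis
    using True assms unfolding gderiv_def has_derivative_iff_norm by simp
qed

lemma hprox_value_finite: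
  assumes "proper_fun f" and "y \<in> hprox f p \<gamma> x"
  shows "\<bar>f y\<bar> \<noteq> \<infinity>"
proof -
  obtain w where "f w \<noteq> \<infinity>"
    using assms(1) unfolding proper_fun_def by blast
  moreover have "f y + ereal (norm (x - y) powr p / (p * \<gamma>)) \<le> f w + ereal (norm (x - w) powr p / (p * \<gamma>))"
    using assms(2) unfolding hprox_def by blast
  moreover have "f y \<noteq> - \<infinity>"
    using assms(1) unfolding proper_fun_def by blast
  ultimately show ?thesis
    by (cases "f y"; cases "f w") auto
qed

lemma henv_le: "henv f p \<gamma> x \<le> f w + ereal (norm (x - w) powr p / (p * \<gamma>))"
  unfolding henv_def by (rule INF_lower) simp

lemma henv_eq_hprox:
  assumes "y \<in> hprox f p \<gamma> x"
  shows "henv f p \<gamma> x = f y + ereal (norm (x - y) powr p / (p * \<gamma>))"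
  using assms unfolding hprox_def by (intro antisym henv_le) (auto simp: henv_def intro: INF_greatest)

lemma hprox_frechet_subgradient:
  fixes f :: "'a::real_inner \<Rightarrow> ereal"
  assumes f: "proper_fun f" and p: "p > 1" and y: "y \<in> hprox f p \<gamma> x"
  shows "(norm (x - y) powr (p - 1) / \<gamma>) *\<^sub>R sgn (x - y) \<in> frechet_subdiff f y"
proof -
  define v where "v = (norm (x - y) powr (p - 1) / \<gamma>) *\<^sub>R sgn (x - y)"
  define G where "G = (\<lambda>u::'a. norm u powr p / (p * \<gamma>))"
  have "(G has_derivative (\<lambda>h. inner h v)) (at (x - y))"
    using has_derivative_mult_right[OF GDERIV_norm_powr[OF p, of "x - y", unfolded gderiv_def],
        of "1 / (p * \<gamma>)"] p
    by (simp add: G_def v_def)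
  then have G_expand: "\<exists>r>0. \<forall>w. norm (w - y) < r \<longrightarrow>
      G (x - w) \<le> G (x - y) - inner v (w - y) + e * norm (w - y)" if "e > 0" for e
  proof -
    obtain r where "r > 0" and r: "\<And>u. norm (u - (x - y)) < r \<Longrightarrow>
        norm (G u - G (x - y) - inner (u - (x - y)) v) \<le> e * norm (u - (x - y))"
      using \<open>e > 0\<close> \<open>(G has_derivative _) _\<close> unfolding has_derivative_at_alt by blast
    have "inner ((x - w) - (x - y)) v = - inner v (w - y)" for w
      by (simp add: inner_commute inner_diff_right)
    then have "G (x - w) \<le> G (x - y) - inner v (w - y) + e * norm (w - y)" if "norm (w - y) < r" for w
      using r[of "x - w"] that by (simp add: norm_minus_commute abs_le_iff)
    with \<open>r > 0\<close> show ?thesis by blast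
  qed
  have fy: "\<bar>f y\<bar> \<noteq> \<infinity>"
    using hprox_value_finite[OF f y] .
  have "\<exists>r>0. \<forall>w. norm (w - y) < r \<longrightarrow> f y + ereal (inner v (w - y) - e * norm (w - y)) \<le> f w"
    if "e > 0" for e
  proof -
    obtain r where "r > 0" and r: "\<And>w. norm (w - y) < r \<Longrightarrow>
        G (x - w) \<le> G (x - y) - inner v (w - y) + e * norm (w - y)"
      using G_expand[OF \<open>e > 0\<close>] by blast
    have "f y + ereal (inner v (w - y) - e * norm (w - y)) \<le> f w" if "norm (w - y) < r" for w
    proof -
      have "f y + ereal (G (x - y)) \<le> f w + ereal (G (x - w))"
        using y unfolding hprox_def G_def by blast
      then show ?thesis
        using r[OF that] fy f unfolding proper_fun_def
        by (cases "f y"; cases "f w") auto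
    qed
    with \<open>r > 0\<close> show ?thesis by blast
  qed
  with fy show ?thesis
    unfolding frechet_subdiff_def v_def[symmetric] by blast
qed

lemma frechet_subdiff_subset_limiting_subdiff: "frechet_subdiff f x \<subseteq> limiting_subdiff f x"
proof
  fix v assume "v \<in> frechet_subdiff f x"
  then show "v \<in> limiting_subdiff f x"
    unfolding limiting_subdiff_def by (intro CollectI exI[of _ "\<lambda>_. x"] exI[of _ "\<lambda>_. v"]) simp
qed

lemma KL_exponent_gap_le:
  fixes t s I c \<gamma> \<theta> p :: real
  assumes \<theta>: "0 < \<theta>" "\<theta> < 1" and p: "p = 1 / (1 - \<theta>)"
    and "t \<ge> 0" "s \<ge> 0" "c > 0" "\<gamma> > 0"
    and KL: "t > 0 \<Longrightarrow> 1 \<le> c * (1 - \<theta>) * t powr (- \<theta>) * I"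
    and I: "I \<le> s powr (p - 1) / \<gamma>"
  shows "t \<le> (c * (1 - \<theta>) / \<gamma>) powr (1 / \<theta>) * s powr p"
proof (cases "t = 0")
  case False
  with \<open>t \<ge> 0\<close> have "t > 0" by simp
  define K where "K = c * (1 - \<theta>) / \<gamma>"
  have "K > 0" using assms by (simp add: K_def)
  have "1 \<le> c * (1 - \<theta>) * t powr (- \<theta>) * I"
    using KL \<open>t > 0\<close> by simp
  also have "\<dots> \<le> c * (1 - \<theta>) * t powr (- \<theta>) * (s powr (p - 1) / \<gamma>)"
    using I assms by (intro mult_left_mono) auto
  also have "\<dots> = t powr (- \<theta>) * (K * s powr (p - 1))"
    by (simp add: K_def)
  finally have "t powr \<theta> \<le> K * s powr (p - 1)"
    using \<open>t > 0\<close> by (simp add: powr_minus field_simps)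
  have "t = (t powr \<theta>) powr (1 / \<theta>)"
    using \<open>t > 0\<close> \<theta> by (simp add: powr_powr)
  also have "\<dots> \<le> (K * s powr (p - 1)) powr (1 / \<theta>)"
    using \<open>t powr \<theta> \<le> _\<close> \<theta> by (intro powr_mono2) auto
  also have "\<dots> = K powr (1 / \<theta>) * s powr ((p - 1) * (1 / \<theta>))"
    using \<open>K > 0\<close> \<open>s \<ge> 0\<close> by (simp add: powr_mult powr_powr)
  also have "(p - 1) * (1 / \<theta>) = p"
    using \<theta> p by (simp add: field_simps)
  finally show ?thesis
    by (simp add: K_def)
qed (use assms in simp)

lemma KL_exponent_hprox_gap:
  fixes \<phi> :: "'a::real_inner \<Rightarrow> ereal"
  assumes \<phi>: "proper_fun \<phi>" and \<theta>: "0 < \<theta>" "\<theta> < 1" and p: "p = 1 / (1 - \<theta>)" and "\<gamma> > 0"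
    and KL: "KL_exponent_at \<phi> \<theta> z" and z: "\<phi> z = ereal L"
  obtains \<rho> \<eta> M where "\<rho> > 0" "\<eta> > 0" "M \<ge> 0"
    "\<And>x y. y \<in> hprox \<phi> p \<gamma> x \<Longrightarrow> norm (y - z) \<le> \<rho> \<Longrightarrow> \<bar>real_of_ereal (\<phi> y) - L\<bar> < \<eta> \<Longrightarrow>
       \<bar>real_of_ereal (\<phi> y) - L\<bar> \<le> M * norm (x - y) powr p"
proof -
  obtain \<rho> \<eta> c where "\<rho> > 0" "\<eta> > 0" "c > 0" and KL_ineq: "\<And>w. w \<in> cball z \<rho> \<inter> dom_subdiff \<phi> \<Longrightarrow>
      0 < \<bar>\<phi> w - \<phi> z\<bar> \<Longrightarrow> \<bar>\<phi> w - \<phi> z\<bar> < \<eta> \<Longrightarrow>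
      1 \<le> c * (1 - \<theta>) * real_of_ereal \<bar>\<phi> w - \<phi> z\<bar> powr (- \<theta>) * infdist 0 (limiting_subdiff \<phi> w)"
    using KL unfolding KL_exponent_at_def by blast
  obtain \<eta>' :: real where "\<eta>' > 0" "ereal \<eta>' \<le> \<eta>"
    using \<open>\<eta> > 0\<close> by (cases \<eta>) (auto intro: that[of 1])
  have p1: "p > 1"
    unfolding p using \<theta> by (simp add: field_simps)
  define M where "M = (c * (1 - \<theta>) / \<gamma>) powr (1 / \<theta>)"
  have "\<bar>real_of_ereal (\<phi> y) - L\<bar> \<le> M * norm (x - y) powr p"
    if y: "y \<in> hprox \<phi> p \<gamma> x" and near: "norm (y - z) \<le> \<rho>" and gap: "\<bar>real_of_ereal (\<phi> y) - L\<bar> < \<eta>'" for x y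
  proof -
    define v where "v = (norm (x - y) powr (p - 1) / \<gamma>) *\<^sub>R sgn (x - y)"
    have v: "v \<in> limiting_subdiff \<phi> y"
      using hprox_frechet_subgradient[OF \<phi> p1 y] frechet_subdiff_subset_limiting_subdiff
      unfolding v_def by blast
    have "norm v \<le> norm (x - y) powr (p - 1) / \<gamma>"
      using \<open>\<gamma> > 0\<close> by (simp add: v_def norm_sgn)
    then have I: "infdist 0 (limiting_subdiff \<phi> y) \<le> norm (x - y) powr (p - 1) / \<gamma>"
      using infdist_le[OF v, of 0] by simp
    have dom: "y \<in> cball z \<rho> \<inter> dom_subdiff \<phi>"
      using v near unfolding dom_subdiff_def by (auto simp: dist_norm norm_minus_commute)
    obtain a where a: "\<phi> y = ereal a"
      using hprox_value_finite[OF \<phi> y] by (cases "\<phi> y") auto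
    show ?thesis
      unfolding M_def
    proof (rule KL_exponent_gap_le[OF \<theta> p _ _ \<open>c > 0\<close> \<open>\<gamma> > 0\<close> _ I])
      assume "0 < \<bar>real_of_ereal (\<phi> y) - L\<bar>"
      moreover have "ereal \<bar>a - L\<bar> < ereal \<eta>'"
        using gap a by simp
      then have "ereal \<bar>a - L\<bar> < \<eta>"
        using \<open>ereal \<eta>' \<le> \<eta>\<close> by (rule less_le_trans)
      ultimately show "1 \<le> c * (1 - \<theta>) * \<bar>real_of_ereal (\<phi> y) - L\<bar> powr - \<theta> * infdist 0 (limiting_subdiff \<phi> y)"
        using KL_ineq[OF dom] a z by simp
    qed simp_all
  qed
  moreover have "M \<ge> 0"
    by (simp add: M_def)
  ultimately show ?thesis
    using that \<open>\<rho> > 0\<close> \<open>\<eta>' > 0\<close> by blast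
qed

lemma geometric_steps_imp_convergent:
  fixes y :: "nat \<Rightarrow> 'a::banach"
  assumes steps: "\<And>n. norm (y (Suc n) - y n) \<le> A * q ^ n" and q: "0 \<le> q" "q < 1"
  obtains l where "y \<longlonglongrightarrow> l" "\<And>n. norm (y n - l) \<le> A * q ^ n / (1 - q)"
proof -
  define f where "f n = y (Suc n) - y n" for n
  have geom: "summable (\<lambda>n. A * q ^ n)"
    using q by (intro summable_mult summable_geometric) auto
  have norm_f: "summable (\<lambda>n. norm (f n))"
    by (rule summable_comparison_test'[OF geom, of 0]) (simp add: f_def steps)
  have f: "summable f"
    using norm_f by (rule summable_norm_cancel)
  have y: "y n = y 0 + sum f {..<n}" for n
    unfolding f_def by (induction n) auto
  define l where "l = y 0 + suminf f"
  have "(\<lambda>n. y 0 + sum f {..<n}) \<longlonglongrightarrow> l"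
    unfolding l_def by (intro tendsto_add tendsto_const summable_LIMSEQ f)
  then have "y \<longlonglongrightarrow> l"
    by (simp only: y[symmetric])
  moreover have "norm (y n - l) \<le> A * q ^ n / (1 - q)" for n
  proof -
    have "l - y n = (\<Sum>j. f (j + n))"
      using suminf_split_initial_segment[OF f, of n] unfolding l_def y[of n] by simp
    then have "norm (y n - l) = norm (\<Sum>j. f (j + n))"
      by (simp add: norm_minus_commute)
    also have "\<dots> \<le> (\<Sum>j. norm (f (j + n)))"
      using summable_ignore_initial_segment[OF norm_f] by (rule summable_norm)
    also have "\<dots> \<le> (\<Sum>j. A * q ^ n * q ^ j)"
    proof (rule suminf_le)
      show "norm (f (j + n)) \<le> A * q ^ n * q ^ j" for j
        using steps[of "j + n"] by (simp add: f_def power_add mult_ac)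
    qed (use summable_ignore_initial_segment[OF norm_f] q in \<open>auto intro: summable_mult summable_geometric\<close>)
    also have "\<dots> = A * q ^ n / (1 - q)"
      using q by (simp add: suminf_mult suminf_geometric)
    finally show ?thesis .
  qed
  ultimately show ?thesis
    using that by blast
qed

lemma eventually_geometric_bound_imp_geometric_bound:
  fixes f :: "nat \<Rightarrow> real"
  assumes "eventually (\<lambda>k. f k \<le> C * q ^ k) sequentially" and "q > 0"
  obtains C' where "C' \<ge> 0" "\<And>k. f k \<le> C' * q ^ k"
proof -
  obtain k0 where k0: "\<And>k. k \<ge> k0 \<Longrightarrow> f k \<le> C * q ^ k"
    using assms(1) unfolding eventually_sequentially by blast
  define C' where "C' = \<bar>C\<bar> + (\<Sum>k<k0. \<bar>f k\<bar> / q ^ k)"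
  have sum_nonneg: "(\<Sum>k<k0. \<bar>f k\<bar> / q ^ k) \<ge> 0"
    using \<open>q > 0\<close> by (intro sum_nonneg) simp
  have "f k \<le> C' * q ^ k" for k
  proof (cases "k < k0")
    case True
    then have "\<bar>f k\<bar> / q ^ k \<le> (\<Sum>k<k0. \<bar>f k\<bar> / q ^ k)"
      using \<open>q > 0\<close> by (intro member_le_sum) auto
    then have "\<bar>f k\<bar> / q ^ k \<le> C'"
      unfolding C'_def by simp
    then show ?thesis
      using \<open>q > 0\<close> by (simp add: divide_le_eq)
  next
    case False
    then have "f k \<le> C * q ^ k"
      by (simp add: k0)
    also have "\<dots> \<le> C' * q ^ k"
      using \<open>q > 0\<close> sum_nonneg unfolding C'_def by (intro mult_right_mono) auto
    finally show ?thesis .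
  qed
  moreover have "C' \<ge> 0"
    using sum_nonneg unfolding C'_def by simp
  ultimately show ?thesis
    using that by blast
qed

lemma localized_linear_decay:
  fixes x :: "nat \<Rightarrow> 'a::real_normed_vector" and a :: "nat \<Rightarrow> real"
  assumes q: "0 < q" "q < 1" and "s > 0" "K \<ge> 0"
    and contract: "\<And>k. k \<ge> k0 \<Longrightarrow> norm (x k - z) < R \<Longrightarrow> a (Suc k) \<le> q * a k"
    and step: "\<And>k. k \<ge> k0 \<Longrightarrow> norm (x (Suc k) - x k) \<le> K * a k powr s"
    and nonneg: "\<And>k. k \<ge> k0 \<Longrightarrow> a k \<ge> 0"
    and start: "norm (x k0 - z) + K / (1 - q powr s) * a k0 powr s < R"
  shows "a (k0 + n) \<le> q ^ n * a k0"
proof -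
  have "0 < q powr s" "q powr s < 1"
    using q powr_less_mono2[OF \<open>s > 0\<close>, of q 1] by auto
  then have "(\<Sum>j<n. (q powr s) ^ j) \<le> 1 / (1 - q powr s)" for n
    by (simp add: sum_gp_strict divide_simps)
  then have geometric_sum: "K * a k0 powr s * (\<Sum>j<n. (q powr s) ^ j) \<le> K / (1 - q powr s) * a k0 powr s" for n
    using \<open>K \<ge> 0\<close> mult_left_mono[of _ "1 / (1 - q powr s)" "K * a k0 powr s"] by simp
  have geometric_step: "norm (x (Suc (k0 + n)) - x (k0 + n)) \<le> K * a k0 powr s * (q powr s) ^ n"
    if "a (k0 + n) \<le> q ^ n * a k0" for n
  proof -
    have "a (k0 + n) powr s \<le> (q ^ n * a k0) powr s"
      using that nonneg[of "k0 + n"] \<open>s > 0\<close> by (intro powr_mono2) auto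
    also have "\<dots> = a k0 powr s * (q powr s) ^ n"
      using q by (simp add: powr_mult powr_realpow[symmetric] powr_powr mult.commute)
    finally have "K * a (k0 + n) powr s \<le> K * (a k0 powr s * (q powr s) ^ n)"
      using \<open>K \<ge> 0\<close> by (rule mult_left_mono)
    then show ?thesis
      using step[of "k0 + n"] by simp
  qed
  \<comment> \<open>The iterates move by less than the geometric sum, so they never leave the ball where
      the contraction applies.\<close>
  have "a (k0 + n) \<le> q ^ n * a k0 \<and> norm (x (k0 + n) - x k0) \<le> K * a k0 powr s * (\<Sum>j<n. (q powr s) ^ j)"
  proof (induction n)
    case (Suc n)
    then have a_n: "a (k0 + n) \<le> q ^ n * a k0"
      and x_n: "norm (x (k0 + n) - x k0) \<le> K * a k0 powr s * (\<Sum>j<n. (q powr s) ^ j)"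
      by auto
    have "norm (x (k0 + n) - z) < R"
      using start x_n geometric_sum[of n] norm_triangle_ineq[of "x (k0 + n) - x k0" "x k0 - z"] by simp
    then have "a (Suc (k0 + n)) \<le> q * a (k0 + n)"
      by (intro contract) simp
    also have "\<dots> \<le> q ^ Suc n * a k0"
      using a_n q by simp
    finally have "a (k0 + Suc n) \<le> q ^ Suc n * a k0"
      by simp
    moreover have "norm (x (k0 + Suc n) - x k0) \<le> K * a k0 powr s * (\<Sum>j<Suc n. (q powr s) ^ j)"
      using norm_triangle_ineq[of "x (Suc (k0 + n)) - x (k0 + n)" "x (k0 + n) - x k0"]
        geometric_step[OF a_n] x_n by (simp add: distrib_left)
    ultimately show ?case ..
  qed simp
  then show ?thesis by blast
qed

lemma norm_convex_step_le:
  fixes x xbar d :: "'a::real_normed_vector"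
  assumes "0 \<le> t" "t \<le> 1" and d: "norm d \<le> D * norm (x - xbar)"
  shows "norm ((1 - t) *\<^sub>R xbar + t *\<^sub>R (x + d) - x) \<le> (1 + D) * norm (x - xbar)"
proof -
  have "(1 - t) *\<^sub>R xbar + t *\<^sub>R (x + d) - x = (1 - t) *\<^sub>R (xbar - x) + t *\<^sub>R d"
    by (simp add: algebra_simps)
  then have "norm ((1 - t) *\<^sub>R xbar + t *\<^sub>R (x + d) - x) \<le> (1 - t) * norm (x - xbar) + t * norm d"
    using norm_triangle_ineq[of "(1 - t) *\<^sub>R (xbar - x)" "t *\<^sub>R d"] assms(1,2)
    by (simp add: norm_minus_commute)
  also have "\<dots> \<le> norm (x - xbar) + D * norm (x - xbar)"
    using assms mult_left_le_one_le[of "norm d" t] mult_left_le_one_le[of "norm (x - xbar)" "1 - t"]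
    by (intro add_mono) auto
  finally show ?thesis
    by (simp add: algebra_simps)
qed

lemma le_powr_of_powr_inverse_le:
  fixes e c p :: real
  assumes "0 \<le> e" "0 < p" "e powr (1 / p) \<le> c"
  shows "e \<le> c powr p"
proof -
  have "e = (e powr (1 / p)) powr p"
    using assms by (simp add: powr_powr)
  also have "\<dots> \<le> c powr p"
    using assms by (intro powr_mono2) auto
  finally show ?thesis .
qed

(* A run of Boosted HiPPA, reduced to what the proof uses: the accepted line-search point is
   (1 - t) xbar^k + t (x^k + d^k) with t = vt^m in [0, 1], and the error condition on eps is
   only needed at the indices k and k + 1 with i = j = k. *)
locale boosted_hippa =
  fixes \<phi> :: "'a::euclidean_space \<Rightarrow> ereal" and \<theta> p \<gamma> \<sigma> D :: real
    and \<epsilon> \<beta> :: "nat \<Rightarrow> real" and P :: "nat \<Rightarrow> 'a \<Rightarrow> 'a" and x xbar ybar d :: "nat \<Rightarrow> 'a"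
  assumes proper: "proper_fun \<phi>" and lsc: "lsc_fun \<phi>" and bounded_below: "bounded_below_fun \<phi>"
    and theta: "0 < \<theta>" "\<theta> < 1" and p_eq: "p = 1 / (1 - \<theta>)"
    and gamma_pos: "\<gamma> > 0" and sigma_pos: "\<sigma> > 0" and D_nonneg: "D \<ge> 0"
    and eps_pos: "\<And>k. \<epsilon> k > 0"
    and env_eps_lt: "\<And>k. env_eps \<phi> p \<gamma> P k (x k) < henv \<phi> p \<gamma> (x k) + ereal (\<epsilon> k)"
    and ybar_prox: "\<And>k. ybar k \<in> hprox \<phi> p \<gamma> (x k)"
    and ybar_near_xbar: "\<And>k. norm (xbar k - ybar k) \<le> norm (x k - xbar k)"
    and linesearch: "\<And>k. \<exists>t. 0 \<le> t \<and> t \<le> 1 \<and> x (Suc k) = (1 - t) *\<^sub>R xbar k + t *\<^sub>R (x k + d k) \<and>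
        env_eps \<phi> p \<gamma> P (Suc k) (x (Suc k)) \<le> env_eps \<phi> p \<gamma> P k (x k)
          - ereal (\<sigma> * norm (x k - xbar k) powr p) + ereal (\<epsilon> k) + ereal (\<epsilon> (Suc k))"
    and direction: "\<And>k. norm (d k) \<le> D * norm (x k - xbar k)"
    and eps_root_le: "\<And>k. \<epsilon> k powr (1 / p) \<le> \<beta> k * norm (x k - xbar k)"
      "\<And>k. \<epsilon> (Suc k) powr (1 / p) \<le> \<beta> k * norm (x k - xbar k)"
    and beta_tendsto: "\<beta> \<longlonglongrightarrow> 0"
    and bounded: "bounded (range x)"
    and KL: "\<forall>z\<in>cluster_points x. KL_exponent_at \<phi> \<theta> z"
begin

lemma p_gt_1: "p > 1"
  unfolding p_eq using theta by (simp add: field_simps)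

definition res :: "nat \<Rightarrow> real" where
  "res k = norm (x k - xbar k)"

lemma res_nonneg: "res k \<ge> 0"
  by (simp add: res_def)

definition Phi :: "nat \<Rightarrow> real" where
  "Phi k = real_of_ereal (env_eps \<phi> p \<gamma> P k (x k))"

definition prox_val :: "nat \<Rightarrow> real" where
  "prox_val k = real_of_ereal (\<phi> (ybar k))"

definition env :: "nat \<Rightarrow> real" where
  "env k = prox_val k + norm (x k - ybar k) powr p / (p * \<gamma>)"

lemma phi_ybar: "\<phi> (ybar k) = ereal (prox_val k)"
  using hprox_value_finite[OF proper ybar_prox[of k]] unfolding prox_val_def by (cases "\<phi> (ybar k)") auto

lemma henv_x: "henv \<phi> p \<gamma> (x k) = ereal (env k)"
  unfolding env_def using henv_eq_hprox[OF ybar_prox] phi_ybar by simp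

lemma env_eps_x: "env_eps \<phi> p \<gamma> P k (x k) = ereal (Phi k)"
proof -
  have "env_eps \<phi> p \<gamma> P k (x k) < ereal (env k + \<epsilon> k)"
    using env_eps_lt[of k] henv_x by simp
  moreover have "env_eps \<phi> p \<gamma> P k (x k) \<noteq> - \<infinity>"
    using proper unfolding proper_fun_def env_eps_def by simp
  ultimately show ?thesis
    unfolding Phi_def by (cases "env_eps \<phi> p \<gamma> P k (x k)") auto
qed

lemma env_le_Phi: "env k \<le> Phi k"
  using henv_le[of \<phi> p \<gamma> "x k" "P k (x k)"] henv_x env_eps_x
  unfolding env_eps_def by simp

lemma Phi_lt_env: "Phi k < env k + \<epsilon> k"
  using env_eps_lt[of k] henv_x env_eps_x by simp

lemma Phi_bounded_below: "\<exists>c. \<forall>k. c \<le> Phi k"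
proof -
  obtain c where c: "\<And>z. ereal c \<le> \<phi> z"
    using bounded_below unfolding bounded_below_fun_def by blast
  have "ereal c \<le> env_eps \<phi> p \<gamma> P k (x k)" for k
    using c[of "P k (x k)"] p_gt_1 gamma_pos unfolding env_eps_def
    by (elim order_trans) (intro ereal_le_add_self; simp)
  then show ?thesis
    using env_eps_x by auto
qed

lemma Phi_descent: "Phi (Suc k) \<le> Phi k - \<sigma> * res k powr p + \<epsilon> k + \<epsilon> (Suc k)"
  using linesearch[of k] unfolding env_eps_x res_def by auto

lemma step: "norm (x (Suc k) - x k) \<le> (1 + D) * res k"
  using linesearch[of k] norm_convex_step_le[OF _ _ direction] unfolding res_def by auto

lemma beta_pos: "\<beta> k > 0"
proof -
  have "0 < \<epsilon> k powr (1 / p)"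
    using eps_pos[of k] by simp
  then have "0 < \<beta> k * res k"
    using eps_root_le(1)[of k] unfolding res_def by linarith
  then show ?thesis
    using res_nonneg[of k] by (simp add: zero_less_mult_iff)
qed

lemma eps_le: "\<epsilon> k + \<epsilon> (Suc k) \<le> 2 * \<beta> k powr p * res k powr p"
proof -
  have "\<epsilon> k \<le> (\<beta> k * res k) powr p" "\<epsilon> (Suc k) \<le> (\<beta> k * res k) powr p"
    using le_powr_of_powr_inverse_le eps_pos eps_root_le p_gt_1 unfolding res_def
    by (meson less_imp_le less_trans zero_less_one)+
  then show ?thesis
    by (simp add: powr_mult)
qed

lemma eventually_Phi_sufficient_decrease:
  "eventually (\<lambda>k. Phi (Suc k) \<le> Phi k - \<sigma> / 2 * res k powr p \<and> \<epsilon> k \<le> res k powr p) sequentially"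
proof -
  have "(\<lambda>k. \<beta> k powr p) \<longlonglongrightarrow> 0"
    using tendsto_zero_powrI[OF beta_tendsto tendsto_const[of p]] beta_pos p_gt_1 by (simp add: less_imp_le)
  then have "(\<lambda>k. 2 * \<beta> k powr p) \<longlonglongrightarrow> 0"
    by (rule tendsto_mult_right_zero)
  moreover have "0 < min (\<sigma> / 2) 1"
    using sigma_pos by simp
  ultimately have "eventually (\<lambda>k. 2 * \<beta> k powr p < min (\<sigma> / 2) 1) sequentially"
    by (rule order_tendstoD(2))
  then show ?thesis
  proof (rule eventually_mono)
    fix k assume "2 * \<beta> k powr p < min (\<sigma> / 2) 1"
    then have "2 * \<beta> k powr p * res k powr p \<le> \<sigma> / 2 * res k powr p"
      "2 * \<beta> k powr p * res k powr p \<le> 1 * res k powr p"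
      by (intro mult_right_mono; simp)+
    then show "Phi (Suc k) \<le> Phi k - \<sigma> / 2 * res k powr p \<and> \<epsilon> k \<le> res k powr p"
      using Phi_descent[of k] eps_le[of k] eps_pos[of "Suc k"] by simp
  qed
qed

lemma eventually_decseq_Phi: "eventually (\<lambda>k. decseq (\<lambda>n. Phi (n + k))) sequentially"
proof -
  obtain k1 where k1: "\<And>k. k \<ge> k1 \<Longrightarrow> Phi (Suc k) \<le> Phi k - \<sigma> / 2 * res k powr p"
    using eventually_Phi_sufficient_decrease unfolding eventually_sequentially by blast
  have "Phi (Suc k) \<le> Phi k" if "k \<ge> k1" for k
  proof -
    have "\<sigma> / 2 * res k powr p \<ge> 0"
      using sigma_pos by simp
    with k1[OF that] show ?thesis
      by linarith
  qed
  then show ?thesis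
    unfolding eventually_sequentially by (auto intro!: exI[of _ k1] decseq_SucI)
qed

definition L :: real where
  "L = lim Phi"

lemma Phi_tendsto: "Phi \<longlonglongrightarrow> L"
proof -
  obtain k where "decseq (\<lambda>n. Phi (n + k))"
    using eventually_decseq_Phi eventually_sequentially by auto
  moreover obtain c where "\<forall>n. c \<le> Phi (n + k)"
    using Phi_bounded_below by blast
  ultimately obtain l where "(\<lambda>n. Phi (n + k)) \<longlonglongrightarrow> l"
    using decseq_convergent by blast
  then have "convergent Phi"
    unfolding convergent_def by (blast intro: LIMSEQ_offset)
  then show ?thesis
    unfolding L_def by (rule convergent_LIMSEQ_iff[THEN iffD1])
qed

lemma eventually_L_le_Phi: "eventually (\<lambda>k. L \<le> Phi k) sequentially"
  using eventually_decseq_Phi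
proof (rule eventually_mono)
  fix k assume "decseq (\<lambda>n. Phi (n + k))"
  from decseq_ge[OF this LIMSEQ_ignore_initial_segment[OF Phi_tendsto], of 0]
  show "L \<le> Phi k" by simp
qed

lemma eventually_res_powr_le: "eventually (\<lambda>k. res k powr p \<le> 2 / \<sigma> * (Phi k - L)) sequentially"
proof -
  have "eventually (\<lambda>k. L \<le> Phi (Suc k)) sequentially"
    using eventually_sequentially_Suc[of "\<lambda>k. L \<le> Phi k"] eventually_L_le_Phi by blast
  with eventually_Phi_sufficient_decrease show ?thesis
  proof eventually_elim
    case (elim k)
    then have "\<sigma> / 2 * res k powr p \<le> Phi k - L"
      by linarith
    then have "2 / \<sigma> * (\<sigma> / 2 * res k powr p) \<le> 2 / \<sigma> * (Phi k - L)"
      using sigma_pos by (intro mult_left_mono) auto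
    then show ?case
      using sigma_pos by simp
  qed
qed

lemma Phi_gap_tendsto: "(\<lambda>k. Phi k - L) \<longlonglongrightarrow> 0"
  using tendsto_diff[OF Phi_tendsto tendsto_const[of L]] by simp

lemma res_powr_tendsto: "(\<lambda>k. res k powr p) \<longlonglongrightarrow> 0"
proof (rule tendsto_sandwich[of "\<lambda>_. 0" _ _ "\<lambda>k. 2 / \<sigma> * (Phi k - L)"])
  show "(\<lambda>k. 2 / \<sigma> * (Phi k - L)) \<longlonglongrightarrow> 0"
    using Phi_gap_tendsto by (rule tendsto_mult_right_zero)
  show "eventually (\<lambda>k. res k powr p \<le> 2 / \<sigma> * (Phi k - L)) sequentially"
    by (rule eventually_res_powr_le)
qed simp_all

lemma res_tendsto: "res \<longlonglongrightarrow> 0"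
proof -
  have "(\<lambda>k. (res k powr p) powr (1 / p)) \<longlonglongrightarrow> 0"
    using res_powr_tendsto by (rule tendsto_zero_powrI) (use p_gt_1 in auto)
  moreover have "(res k powr p) powr (1 / p) = res k" for k
    using p_gt_1 res_nonneg[of k] by (simp add: powr_powr)
  ultimately show ?thesis
    by simp
qed

lemma eps_tendsto: "\<epsilon> \<longlonglongrightarrow> 0"
proof (rule tendsto_sandwich[of "\<lambda>_. 0" _ _ "\<lambda>k. res k powr p"])
  show "eventually (\<lambda>k. 0 \<le> \<epsilon> k) sequentially"
    using eps_pos by (simp add: less_imp_le)
  show "eventually (\<lambda>k. \<epsilon> k \<le> res k powr p) sequentially"
    using eventually_Phi_sufficient_decrease by (rule eventually_mono) simp
qed (simp_all add: res_powr_tendsto)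

lemma norm_x_ybar_le: "norm (x k - ybar k) \<le> 2 * res k"
  using norm_triangle_ineq[of "x k - xbar k" "xbar k - ybar k"] ybar_near_xbar[of k]
  unfolding res_def by simp

lemma x_ybar_tendsto: "(\<lambda>k. x k - ybar k) \<longlonglongrightarrow> 0"
proof -
  have "(\<lambda>k. 2 * res k) \<longlonglongrightarrow> 0"
    using tendsto_mult_right_zero[OF res_tendsto] .
  then have "(\<lambda>k. norm (x k - ybar k)) \<longlonglongrightarrow> 0"
    using norm_x_ybar_le by (auto intro: tendsto_sandwich[of "\<lambda>_. 0" _ _ "\<lambda>k. 2 * res k", OF _ _ tendsto_const])
  then show ?thesis
    by (rule tendsto_norm_zero_cancel)
qed

lemma env_tendsto: "env \<longlonglongrightarrow> L"
proof (rule tendsto_sandwich[of "\<lambda>k. Phi k - \<epsilon> k" _ _ Phi])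
  show "\<forall>\<^sub>F k in sequentially. Phi k - \<epsilon> k \<le> env k"
    using Phi_lt_env by (simp add: less_imp_le algebra_simps)
  show "\<forall>\<^sub>F k in sequentially. env k \<le> Phi k"
    using env_le_Phi by simp
  show "(\<lambda>k. Phi k - \<epsilon> k) \<longlonglongrightarrow> L"
    using tendsto_diff[OF Phi_tendsto eps_tendsto] by simp
qed (rule Phi_tendsto)

lemma prox_val_tendsto: "prox_val \<longlonglongrightarrow> L"
proof -
  have "(\<lambda>k. norm (x k - ybar k) powr p / (p * \<gamma>)) \<longlonglongrightarrow> 0"
    using p_gt_1 by (intro tendsto_divide_zero tendsto_zero_powrI tendsto_norm_zero x_ybar_tendsto) auto
  from tendsto_diff[OF env_tendsto this] show ?thesis
    by (simp add: env_def)
qed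

lemma cluster_point_L_le:
  assumes "z \<in> cluster_points x"
  shows "ereal L \<le> \<phi> w + ereal (norm (z - w) powr p / (p * \<gamma>))"
proof (cases "\<phi> w")
  case (real c)
  obtain r where r: "strict_mono r" "(x \<circ> r) \<longlonglongrightarrow> z"
    using assms unfolding cluster_points_def by blast
  have "(\<lambda>k. c + norm (x (r k) - w) powr p / (p * \<gamma>)) \<longlonglongrightarrow> c + norm (z - w) powr p / (p * \<gamma>)"
    using r(2) p_gt_1 gamma_pos unfolding comp_def
    by (intro tendsto_intros) auto
  moreover have "env (r k) \<le> c + norm (x (r k) - w) powr p / (p * \<gamma>)" for k
    using henv_le[of \<phi> p \<gamma> "x (r k)" w] henv_x real by simp
  ultimately have "L \<le> c + norm (z - w) powr p / (p * \<gamma>)"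
    using LIMSEQ_subseq_LIMSEQ[OF env_tendsto r(1)] unfolding comp_def
    by (intro LIMSEQ_le) auto
  then show ?thesis
    using real by simp
next
  case MInf
  then show ?thesis
    using proper unfolding proper_fun_def by blast
qed simp

lemma cluster_point_value:
  assumes "z \<in> cluster_points x"
  shows "\<phi> z = ereal L"
proof (rule antisym)
  obtain r where r: "strict_mono r" "(x \<circ> r) \<longlonglongrightarrow> z"
    using assms unfolding cluster_points_def by blast
  have "(\<lambda>k. x (r k) - (x (r k) - ybar (r k))) \<longlonglongrightarrow> z - 0"
    using r(2) LIMSEQ_subseq_LIMSEQ[OF x_ybar_tendsto r(1)] unfolding comp_def
    by (intro tendsto_diff)
  then have "(ybar \<circ> r) \<longlonglongrightarrow> z"
    by (simp add: comp_def)
  then have "\<phi> z \<le> liminf (\<lambda>k. \<phi> ((ybar \<circ> r) k))"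
    using lsc unfolding lsc_fun_def by blast
  also have "\<dots> = ereal L"
    using LIMSEQ_subseq_LIMSEQ[OF prox_val_tendsto r(1)]
    by (intro lim_imp_Liminf) (auto simp: comp_def phi_ybar)
  finally show "\<phi> z \<le> ereal L" .
  show "ereal L \<le> \<phi> z"
    using cluster_point_L_le[OF assms, of z] p_gt_1 by simp
qed

lemma cluster_point_hprox_fixed:
  assumes "z \<in> cluster_points x"
  shows "z \<in> hprox \<phi> p \<gamma> z"
  using cluster_point_value[OF assms] cluster_point_L_le[OF assms] p_gt_1
  unfolding hprox_def by simp

lemma Phi_gap_le_res_near_cluster_point:
  assumes z: "z \<in> cluster_points x"
  obtains R C where "R > 0" "C \<ge> 0"
    "eventually (\<lambda>k. norm (x k - z) < R \<longrightarrow> Phi k - L \<le> C * res k powr p) sequentially"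
proof -
  obtain \<rho> \<eta> M where "\<rho> > 0" "\<eta> > 0" "M \<ge> 0" and gap: "\<And>x y. y \<in> hprox \<phi> p \<gamma> x \<Longrightarrow>
      norm (y - z) \<le> \<rho> \<Longrightarrow> \<bar>real_of_ereal (\<phi> y) - L\<bar> < \<eta> \<Longrightarrow>
      \<bar>real_of_ereal (\<phi> y) - L\<bar> \<le> M * norm (x - y) powr p"
    using KL_exponent_hprox_gap[OF proper theta p_eq gamma_pos] KL z cluster_point_value[OF z] by metis
  define C where "C = (M + 1 / (p * \<gamma>)) * 2 powr p + 1"
  have "C \<ge> 0"
    using \<open>M \<ge> 0\<close> p_gt_1 gamma_pos by (simp add: C_def)
  have "eventually (\<lambda>k. \<bar>prox_val k - L\<bar> < \<eta>) sequentially"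
    using tendstoD[OF prox_val_tendsto \<open>\<eta> > 0\<close>] by (simp add: dist_real_def)
  moreover have "eventually (\<lambda>k. norm (x k - ybar k) < \<rho> / 2) sequentially"
    using tendstoD[OF x_ybar_tendsto, of "\<rho> / 2"] \<open>\<rho> > 0\<close> by simp
  moreover note eventually_Phi_sufficient_decrease
  ultimately have "eventually (\<lambda>k. norm (x k - z) < \<rho> / 2 \<longrightarrow> Phi k - L \<le> C * res k powr p) sequentially"
  proof eventually_elim
    case (elim k)
    show ?case
    proof
      assume "norm (x k - z) < \<rho> / 2"
      with elim have "norm (ybar k - z) \<le> \<rho>"
        using norm_triangle_ineq[of "ybar k - x k" "x k - z"] by (simp add: norm_minus_commute)
      then have "prox_val k - L \<le> M * norm (x k - ybar k) powr p"
        using gap[OF ybar_prox] elim unfolding prox_val_def by fastforce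
      then have "Phi k - L \<le> (M + 1 / (p * \<gamma>)) * norm (x k - ybar k) powr p + res k powr p"
        using Phi_lt_env[of k] elim unfolding env_def by (simp add: algebra_simps)
      also have "\<dots> \<le> (M + 1 / (p * \<gamma>)) * (2 powr p * res k powr p) + res k powr p"
        using powr_mono2[of p _ "2 * res k", OF _ _ norm_x_ybar_le] p_gt_1 gamma_pos res_nonneg \<open>M \<ge> 0\<close>
        by (intro add_right_mono mult_left_mono) (auto simp: powr_mult)
      also have "\<dots> = C * res k powr p"
        by (simp add: C_def algebra_simps)
      finally show "Phi k - L \<le> C * res k powr p" .
    qed
  qed
  with \<open>\<rho> > 0\<close> \<open>C \<ge> 0\<close> show ?thesis
    using that[of "\<rho> / 2" C] by simp
qed

lemma Phi_contraction_near_cluster_point: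
  assumes z: "z \<in> cluster_points x"
  obtains R q where "R > 0" "0 < q" "q < 1"
    "eventually (\<lambda>k. norm (x k - z) < R \<longrightarrow> Phi (Suc k) - L \<le> q * (Phi k - L)) sequentially"
proof -
  obtain R C where "R > 0" "C \<ge> 0"
    and gap: "eventually (\<lambda>k. norm (x k - z) < R \<longrightarrow> Phi k - L \<le> C * res k powr p) sequentially"
    using Phi_gap_le_res_near_cluster_point[OF z] .
  define D where "D = 2 * C / \<sigma> + 2"
  have "D \<ge> 2"
    using \<open>C \<ge> 0\<close> sigma_pos by (simp add: D_def)
  from gap eventually_Phi_sufficient_decrease
  have "eventually (\<lambda>k. norm (x k - z) < R \<longrightarrow> Phi (Suc k) - L \<le> (1 - 1 / D) * (Phi k - L)) sequentially"
  proof eventually_elim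
    case (elim k)
    show ?case
    proof
      assume "norm (x k - z) < R"
      with elim have "Phi k - L \<le> C * res k powr p"
        by blast
      also have "\<dots> \<le> C * (2 / \<sigma> * (Phi k - Phi (Suc k)))"
        using elim sigma_pos \<open>C \<ge> 0\<close> by (intro mult_left_mono) (auto simp: field_simps)
      also have "\<dots> \<le> D * (Phi k - Phi (Suc k))"
      proof -
        have "0 \<le> \<sigma> / 2 * res k powr p"
          using sigma_pos by simp
        then have "0 \<le> Phi k - Phi (Suc k)"
          using elim by linarith
        then show ?thesis
          unfolding D_def by (simp add: algebra_simps)
      qed
      finally show "Phi (Suc k) - L \<le> (1 - 1 / D) * (Phi k - L)"
        using \<open>D \<ge> 2\<close> by (simp add: field_simps)
    qed
  qed
  moreover have "0 < 1 - 1 / D" "1 - 1 / D < 1"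
    using \<open>D \<ge> 2\<close> by auto
  ultimately show ?thesis
    using that \<open>R > 0\<close> by blast
qed

lemma Phi_gap_powr_tendsto: "(\<lambda>k. (Phi k - L) powr (1 / p)) \<longlonglongrightarrow> 0"
  using Phi_gap_tendsto by (rule tendsto_zero_powrI) (use eventually_L_le_Phi p_gt_1 in \<open>auto elim: eventually_mono\<close>)

lemma eventually_step_le_Phi_gap:
  "eventually (\<lambda>k. norm (x (Suc k) - x k) \<le> (1 + D) * (2 / \<sigma>) powr (1 / p) * (Phi k - L) powr (1 / p)) sequentially"
  using eventually_res_powr_le eventually_L_le_Phi
proof eventually_elim
  case (elim k)
  have "res k = (res k powr p) powr (1 / p)"
    using p_gt_1 res_nonneg by (simp add: powr_powr)
  also have "\<dots> \<le> (2 / \<sigma> * (Phi k - L)) powr (1 / p)"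
    using elim p_gt_1 by (intro powr_mono2) auto
  also have "\<dots> = (2 / \<sigma>) powr (1 / p) * (Phi k - L) powr (1 / p)"
    by (rule powr_mult)
  finally have "(1 + D) * res k \<le> (1 + D) * ((2 / \<sigma>) powr (1 / p) * (Phi k - L) powr (1 / p))"
    using D_nonneg by (intro mult_left_mono) auto
  then show ?case
    using step[of k] by (simp add: mult.assoc)
qed

lemma cluster_point_late_start:
  assumes "z \<in> cluster_points x" and "R > 0"
  obtains k0 where "k0 \<ge> N" "norm (x k0 - z) + c * (Phi k0 - L) powr (1 / p) < R"
proof -
  obtain r where r: "strict_mono r" "(x \<circ> r) \<longlonglongrightarrow> z"
    using assms(1) unfolding cluster_points_def by blast
  have "(\<lambda>k. c * (Phi k - L) powr (1 / p)) \<longlonglongrightarrow> 0"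
    using Phi_gap_powr_tendsto by (rule tendsto_mult_right_zero)
  then have "eventually (\<lambda>k. k \<ge> N \<and> c * (Phi k - L) powr (1 / p) < R / 2) sequentially"
    using assms(2) by (intro eventually_conj eventually_ge_at_top order_tendstoD(2)) auto
  then have "eventually (\<lambda>n. r n \<ge> N \<and> c * (Phi (r n) - L) powr (1 / p) < R / 2) sequentially"
    using filterlim_subseq[OF r(1)] by (rule eventually_compose_filterlim)
  moreover have "eventually (\<lambda>n. norm (x (r n) - z) < R / 2) sequentially"
    using tendstoD[OF r(2), of "R / 2"] assms(2) by (simp add: dist_norm)
  ultimately have "eventually (\<lambda>n. (r n \<ge> N \<and> c * (Phi (r n) - L) powr (1 / p) < R / 2)
      \<and> norm (x (r n) - z) < R / 2) sequentially"
    by (rule eventually_conj)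
  then obtain n where "r n \<ge> N" "c * (Phi (r n) - L) powr (1 / p) < R / 2" "norm (x (r n) - z) < R / 2"
    unfolding eventually_sequentially by blast
  then show ?thesis
    using that[of "r n"] by simp
qed

lemma Phi_linear_rate:
  obtains q C where "0 < q" "q < 1" "eventually (\<lambda>k. Phi k - L \<le> C * q ^ k) sequentially"
proof -
  obtain z r where "strict_mono r" "(x \<circ> r) \<longlonglongrightarrow> z"
    using bounded_imp_convergent_subsequence[OF bounded] by blast
  then have z: "z \<in> cluster_points x"
    unfolding cluster_points_def by blast
  obtain R q where "R > 0" "0 < q" "q < 1" and contract:
      "eventually (\<lambda>k. norm (x k - z) < R \<longrightarrow> Phi (Suc k) - L \<le> q * (Phi k - L)) sequentially"
    using Phi_contraction_near_cluster_point[OF z] .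
  define c where "c = (1 + D) * (2 / \<sigma>) powr (1 / p)"
  have "c \<ge> 0"
    using D_nonneg by (simp add: c_def)
  obtain N where N: "\<And>k. k \<ge> N \<Longrightarrow> (norm (x k - z) < R \<longrightarrow> Phi (Suc k) - L \<le> q * (Phi k - L))
      \<and> norm (x (Suc k) - x k) \<le> c * (Phi k - L) powr (1 / p) \<and> L \<le> Phi k"
    using eventually_conj[OF contract eventually_conj[OF eventually_step_le_Phi_gap eventually_L_le_Phi]]
    unfolding eventually_sequentially c_def by blast
  obtain k0 where "k0 \<ge> N" and start:
      "norm (x k0 - z) + c / (1 - q powr (1 / p)) * (Phi k0 - L) powr (1 / p) < R"
    using cluster_point_late_start[OF z \<open>R > 0\<close>, of N "c / (1 - q powr (1 / p))"] by blast
  have contract_late: "Phi (Suc k) - L \<le> q * (Phi k - L)" if "k \<ge> k0" "norm (x k - z) < R" for k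
    using N[of k] \<open>k0 \<ge> N\<close> that by auto
  have step_late: "norm (x (Suc k) - x k) \<le> c * (Phi k - L) powr (1 / p)" if "k \<ge> k0" for k
    using N[of k] \<open>k0 \<ge> N\<close> that by auto
  have gap_nonneg: "Phi k - L \<ge> 0" if "k \<ge> k0" for k
    using N[of k] \<open>k0 \<ge> N\<close> that by auto
  have "1 / p > 0"
    using p_gt_1 by simp
  from localized_linear_decay[where a = "\<lambda>k. Phi k - L", OF \<open>0 < q\<close> \<open>q < 1\<close> \<open>1 / p > 0\<close> \<open>c \<ge> 0\<close>
      contract_late step_late gap_nonneg start]
  have decay: "Phi (k0 + n) - L \<le> q ^ n * (Phi k0 - L)" for n .
  have "Phi (k0 + n) - L \<le> (Phi k0 - L) / q ^ k0 * q ^ (k0 + n)" for n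
    using decay[of n] \<open>0 < q\<close> by (simp add: power_add mult.commute)
  then have "Phi k - L \<le> (Phi k0 - L) / q ^ k0 * q ^ k" if "k \<ge> k0" for k
    using that by (metis le_add_diff_inverse)
  then have "eventually (\<lambda>k. Phi k - L \<le> (Phi k0 - L) / q ^ k0 * q ^ k) sequentially"
    by (rule eventually_sequentiallyI)
  with \<open>0 < q\<close> \<open>q < 1\<close> show ?thesis
    by (rule that)
qed

lemma res_linear_rate:
  obtains q C where "0 < q" "q < 1" "C \<ge> 0" "\<And>k. res k \<le> C * q ^ k"
proof -
  obtain q0 C0 where "0 < q0" "q0 < 1" and gap: "eventually (\<lambda>k. Phi k - L \<le> C0 * q0 ^ k) sequentially"
    using Phi_linear_rate .
  define q where "q = q0 powr (1 / p)"
  have "0 < q" "q < 1"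
    unfolding q_def using \<open>0 < q0\<close> \<open>q0 < 1\<close> p_gt_1 powr_less_mono2[of "1 / p" q0 1] by auto
  from eventually_res_powr_le gap eventually_L_le_Phi
  have "eventually (\<lambda>k. res k \<le> (2 / \<sigma> * C0) powr (1 / p) * q ^ k) sequentially"
  proof eventually_elim
    case (elim k)
    have "res k = (res k powr p) powr (1 / p)"
      using p_gt_1 res_nonneg by (simp add: powr_powr)
    also have "\<dots> \<le> (2 / \<sigma> * (C0 * q0 ^ k)) powr (1 / p)"
    proof (rule powr_mono2)
      have "2 / \<sigma> * (Phi k - L) \<le> 2 / \<sigma> * (C0 * q0 ^ k)"
        using elim sigma_pos by (intro mult_left_mono) auto
      then show "res k powr p \<le> 2 / \<sigma> * (C0 * q0 ^ k)"
        using elim by linarith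
    qed (use p_gt_1 in auto)
    also have "\<dots> = (2 / \<sigma> * C0) powr (1 / p) * (q0 ^ k) powr (1 / p)"
      unfolding mult.assoc[symmetric] by (rule powr_mult)
    also have "(q0 ^ k) powr (1 / p) = q ^ k"
      unfolding q_def using \<open>0 < q0\<close> by (simp add: powr_realpow[symmetric] powr_powr mult.commute)
    finally show ?case .
  qed
  then obtain C where "C \<ge> 0" "\<And>k. res k \<le> C * q ^ k"
    using eventually_geometric_bound_imp_geometric_bound \<open>0 < q\<close> by blast
  with \<open>0 < q\<close> \<open>q < 1\<close> show ?thesis
    by (rule that)
qed

theorem linear_convergence_to_fixed_point:
  "\<exists>xhat. xhat \<in> hprox \<phi> p \<gamma> xhat \<and>
     (\<exists>C q. 0 < q \<and> q < 1 \<and>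
        (\<forall>k. norm (x k - xhat) \<le> C * q ^ k) \<and>
        (\<forall>k. norm (xbar k - xhat) \<le> C * q ^ k) \<and>
        (\<forall>k. norm (ybar k - xhat) \<le> C * q ^ k))"
proof -
  obtain q C where q: "0 < q" "q < 1" and "C \<ge> 0" and res_rate: "\<And>k. res k \<le> C * q ^ k"
    using res_linear_rate by blast
  have "norm (x (Suc k) - x k) \<le> (1 + D) * C * q ^ k" for k
    using order_trans[OF step mult_left_mono[OF res_rate]] D_nonneg by (simp add: mult.assoc)
  then obtain xhat where "x \<longlonglongrightarrow> xhat" and x_rate: "\<And>k. norm (x k - xhat) \<le> (1 + D) * C * q ^ k / (1 - q)"
    using geometric_steps_imp_convergent q by (metis less_imp_le)
  then have "xhat \<in> cluster_points x"
    unfolding cluster_points_def by (intro CollectI exI[of _ id]) (simp add: strict_mono_def)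
  define C' where "C' = (1 + D) * C / (1 - q) + 2 * C"
  have "norm (x k - xhat) \<le> C' * q ^ k \<and> norm (xbar k - xhat) \<le> C' * q ^ k \<and>
      norm (ybar k - xhat) \<le> C' * q ^ k" for k
  proof -
    have "norm (xbar k - xhat) \<le> res k + norm (x k - xhat)"
      using norm_triangle_ineq[of "xbar k - x k" "x k - xhat"] unfolding res_def by (simp add: norm_minus_commute)
    moreover have "norm (ybar k - xhat) \<le> res k + norm (xbar k - xhat)"
      using norm_triangle_ineq[of "ybar k - xbar k" "xbar k - xhat"] ybar_near_xbar[of k]
      unfolding res_def by (simp add: norm_minus_commute)
    moreover have "C' * q ^ k = (1 + D) * C * q ^ k / (1 - q) + 2 * (C * q ^ k)"
      by (simp add: C'_def algebra_simps)
    moreover have "0 \<le> C * q ^ k"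
      using \<open>C \<ge> 0\<close> q by simp
    ultimately show ?thesis
      using x_rate[of k] res_rate[of k] by linarith
  qed
  then show ?thesis
    using cluster_point_hprox_fixed[OF \<open>xhat \<in> cluster_points x\<close>] q by blast
qed

end

theorem corollary2:
  fixes \<phi> :: "'a::euclidean_space \<Rightarrow> ereal"
    and \<theta> p \<gamma> \<sigma> vt \<omega> D :: real
    and \<epsilon> \<delta> \<beta> :: "nat \<Rightarrow> real"
    and P :: "nat \<Rightarrow> 'a \<Rightarrow> 'a"
    and x xbar ybar d :: "nat \<Rightarrow> 'a"
  assumes phi: "proper_fun \<phi>" "lsc_fun \<phi>" "bounded_below_fun \<phi>"
    and theta: "0 < \<theta>" "\<theta> < 1" and p_def: "p = 1 / (1 - \<theta>)"
    and params: "\<gamma> > 0" "0 < \<sigma>" "\<sigma> < 1 / (p * \<gamma>)" "0 < vt" "vt < 1"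
    and eps: "\<forall>k. \<epsilon> k > 0" "antimono \<epsilon>" "summable \<epsilon>"
    and del: "\<forall>k. \<delta> k > 0" "antimono \<delta>" "\<delta> \<longlonglongrightarrow> 0"
    and approx: "\<forall>j z. infdist (P j z) (hprox \<phi> p \<gamma> z) < \<delta> j \<and>
                       env_eps \<phi> p \<gamma> P j z < henv \<phi> p \<gamma> z + ereal (\<epsilon> j)"
    and xbar_def: "\<forall>k. xbar k = P k (x k)"
    and linesearch: "\<forall>k. \<exists>m::nat.
        (let trial = (\<lambda>m::nat. (1 - vt ^ m) *\<^sub>R xbar k + vt ^ m *\<^sub>R (x k + d k));
             test = (\<lambda>m::nat. env_eps \<phi> p \<gamma> P (Suc k) (trial m)
                       \<le> env_eps \<phi> p \<gamma> P k (x k) - ereal (\<sigma> * norm (x k - xbar k) powr p)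
                         + ereal (\<epsilon> k) + ereal (\<epsilon> (Suc k)))
         in test m \<and> (\<forall>m'<m. \<not> test m') \<and> x (Suc k) = trial m)"
    and ybar: "\<forall>k. ybar k \<in> hprox \<phi> p \<gamma> (x k) \<and>
                   norm (xbar k - ybar k) = infdist (xbar k) (hprox \<phi> p \<gamma> (x k))"
    and KL: "\<forall>z\<in>cluster_points x. KL_exponent_at \<phi> \<theta> z"
    and bdd: "bounded (range x)"
    and dir: "D \<ge> 0" "\<forall>k. norm (d k) \<le> D * norm (x k - xbar k)"
    and omega: "0 < \<omega>" "\<omega> < 1"
    and beta: "\<forall>k. \<beta> k > 0" "antimono \<beta>" "summable \<beta>"
    and eps_bound: "\<forall>k. \<epsilon> k powr (1 / p) \<le> \<beta> k \<and>
                        \<epsilon> k powr (1 / p) \<le> \<omega> * norm (x k - xbar k) \<and>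
                        (\<forall>i j. i \<le> j \<and> j \<le> k \<longrightarrow> \<epsilon> k powr (1 / p) \<le> \<beta> j * norm (x i - xbar i))"
    and del_bound: "\<forall>k. \<delta> k \<le> \<beta> k \<and>
                        \<delta> k \<le> \<omega> * norm (x k - xbar k) \<and>
                        (\<forall>i j. i \<le> j \<and> j \<le> k \<longrightarrow> \<delta> k \<le> \<beta> j * norm (x i - xbar i))"
    and del_tail: "summable (\<lambda>k. \<Sum>j. \<delta> (j + k))"
    and eps_tail: "summable (\<lambda>k. \<Sum>j. \<epsilon> (j + k) powr (1 / p))"
  shows "\<exists>xhat. xhat \<in> hprox \<phi> p \<gamma> xhat \<and>
           (\<exists>C q. 0 < q \<and> q < 1 \<and>
              (\<forall>k. norm (x k - xhat) \<le> C * q ^ k) \<and>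
              (\<forall>k. norm (xbar k - xhat) \<le> C * q ^ k) \<and>
              (\<forall>k. norm (ybar k - xhat) \<le> C * q ^ k))"
proof -
  have "\<exists>t. 0 \<le> t \<and> t \<le> 1 \<and> x (Suc k) = (1 - t) *\<^sub>R xbar k + t *\<^sub>R (x k + d k) \<and>
      env_eps \<phi> p \<gamma> P (Suc k) (x (Suc k)) \<le> env_eps \<phi> p \<gamma> P k (x k)
        - ereal (\<sigma> * norm (x k - xbar k) powr p) + ereal (\<epsilon> k) + ereal (\<epsilon> (Suc k))" for k
  proof -
    obtain m where "x (Suc k) = (1 - vt ^ m) *\<^sub>R xbar k + vt ^ m *\<^sub>R (x k + d k)"
      and "env_eps \<phi> p \<gamma> P (Suc k) ((1 - vt ^ m) *\<^sub>R xbar k + vt ^ m *\<^sub>R (x k + d k))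
        \<le> env_eps \<phi> p \<gamma> P k (x k) - ereal (\<sigma> * norm (x k - xbar k) powr p) + ereal (\<epsilon> k) + ereal (\<epsilon> (Suc k))"
      using linesearch unfolding Let_def by blast
    with params show ?thesis
      by (intro exI[of _ "vt ^ m"]) (simp add: power_le_one)
  qed
  moreover have "norm (xbar k - ybar k) \<le> norm (x k - xbar k)" for k
  proof -
    have "norm (xbar k - ybar k) < \<delta> k"
      using ybar approx xbar_def by simp
    also have "\<dots> \<le> \<omega> * norm (x k - xbar k)"
      using del_bound by blast
    finally show ?thesis
      using omega mult_left_le_one_le[of "norm (x k - xbar k)" \<omega>] by simp
  qed
  moreover have "\<epsilon> (Suc k) powr (1 / p) \<le> \<beta> k * norm (x k - xbar k)" for k
    using eps_bound le_SucI by blast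
  ultimately interpret boosted_hippa \<phi> \<theta> p \<gamma> \<sigma> D \<epsilon> \<beta> P x xbar ybar d
    using phi theta p_def params dir eps(1) approx ybar eps_bound summable_LIMSEQ_zero[OF beta(3)] bdd KL
    by unfold_locales auto
  show ?thesis
    by (rule linear_convergence_to_fixed_point)
qed

end
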